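(* Let $\Delta,\Sigma$ be alphabets and $\varphi:\Delta\to2^{\Sigma^*}$ a regular language substitution. Let $L\subseteq\Delta^*$ be a union-free language of the form $L=N_1S_1^\star N_2\cdots N_mS_m^\star N_{m+1}$ with words $N_h\in\Delta^*$ and union-free languages $S_h\subseteq\Delta^*$. If $\varepsilon\in\varphi(w)$ for all $w\in S_h$ and all $h\in\{1,\dots,m\}$, then $L$ has 1-word summaries.
   Context: A regular language substitution $\varphi:\Delta\to2^{\Sigma^*}$ maps each symbol to a regular language over $\Sigma$, extended to words by $\varphi(\varepsilon)=\{\varepsilon\}$, $\varphi(\delta w)=\varphi(\delta)\varphi(w)$, and to sets of words by $\varphi(L)=\bigcup_{w\in L}\varphi(w)$. A language is union-free if it is denoted by a regular expression using only symbols, concatenation and Kleene star (no union). A language $L\subseteq\Delta^*$ has 1-word summaries if for every finite subset $F\subseteq L$ there exists a word $w\in L$ with $\varphi(F)\subseteq\varphi(w)$. *)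

theory Defs
  imports Main
begin

definition conc :: "'a list set \<Rightarrow> 'a list set \<Rightarrow> 'a list set" where
  "conc A B = {u @ v | u v. u \<in> A \<and> v \<in> B}"

inductive_set kstar :: "'a list set \<Rightarrow> 'a list set" for A :: "'a list set" where
  kstar_Nil: "[] \<in> kstar A"
| kstar_app: "u \<in> A \<Longrightarrow> v \<in> kstar A \<Longrightarrow> u @ v \<in> kstar A"

datatype 'a rexp = Zero | One | Atom 'a | Plus "'a rexp" "'a rexp"
  | Times "'a rexp" "'a rexp" | Star "'a rexp"

fun lang :: "'a rexp \<Rightarrow> 'a list set" where
  "lang Zero = {}"
| "lang One = {[]}"
| "lang (Atom a) = {[a]}"
| "lang (Plus r s) = lang r \<union> lang s"
| "lang (Times r s) = conc (lang r) (lang s)"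
| "lang (Star r) = kstar (lang r)"

definition regular :: "'a list set \<Rightarrow> bool" where
  "regular L \<longleftrightarrow> (\<exists>r. lang r = L)"

datatype 'a ufexp = UAtom 'a | UTimes "'a ufexp" "'a ufexp" | UStar "'a ufexp"

fun uflang :: "'a ufexp \<Rightarrow> 'a list set" where
  "uflang (UAtom a) = {[a]}"
| "uflang (UTimes r s) = conc (uflang r) (uflang s)"
| "uflang (UStar r) = kstar (uflang r)"

definition union_free :: "'a list set \<Rightarrow> bool" where
  "union_free L \<longleftrightarrow> (\<exists>r. uflang r = L)"

definition regular_subst :: "('d \<Rightarrow> 's list set) \<Rightarrow> bool" where
  "regular_subst \<phi> \<longleftrightarrow> (\<forall>d. regular (\<phi> d))"

fun subst_word :: "('d \<Rightarrow> 's list set) \<Rightarrow> 'd list \<Rightarrow> 's list set" where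
  "subst_word \<phi> [] = {[]}"
| "subst_word \<phi> (d # w) = conc (\<phi> d) (subst_word \<phi> w)"

definition subst_lang :: "('d \<Rightarrow> 's list set) \<Rightarrow> 'd list set \<Rightarrow> 's list set" where
  "subst_lang \<phi> L = (\<Union>w\<in>L. subst_word \<phi> w)"

definition has_1word_summaries :: "('d \<Rightarrow> 's list set) \<Rightarrow> 'd list set \<Rightarrow> bool" where
  "has_1word_summaries \<phi> L \<longleftrightarrow>
     (\<forall>F. finite F \<and> F \<subseteq> L \<longrightarrow> (\<exists>w\<in>L. subst_lang \<phi> F \<subseteq> subst_word \<phi> w))"

text \<open>The language N_1 S_1^* N_2 ... N_m S_m^* N_{m+1}, with N, S indexed from 1.\<close>
fun uf_form :: "nat \<Rightarrow> (nat \<Rightarrow> 'a list) \<Rightarrow> (nat \<Rightarrow> 'a list set) \<Rightarrow> 'a list set" where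
  "uf_form 0 N S = {N 1}"
| "uf_form (Suc m) N S = conc (uf_form m N S) (conc (kstar (S (Suc m))) {N (Suc (Suc m))})"

end

theory Submission
  imports Defs
begin

text \<open>The summary property is closed under concatenation of languages, and a Kleene star
  \<open>S\<^sup>*\<close> has it as soon as every word of \<open>S\<close> can be erased by \<open>\<phi>\<close>: then the concatenation
  of all words of a finite \<open>F \<subseteq> S\<^sup>*\<close> is a summary, since erasing all but one factor
  recovers the image of that factor. A singleton trivially has summaries, so the
  theorem follows by induction on the number of starred factors.\<close>

lemma conc_mono: "A \<subseteq> A' \<Longrightarrow> B \<subseteq> B' \<Longrightarrow> conc A B \<subseteq> conc A' B'"
  unfolding conc_def by blast

lemma subset_concI1: "[] \<in> B \<Longrightarrow> A \<subseteq> conc A B"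
  unfolding conc_def by force

lemma subset_concI2: "[] \<in> A \<Longrightarrow> B \<subseteq> conc A B"
  unfolding conc_def by force

lemma kstar_append: "u \<in> kstar S \<Longrightarrow> v \<in> kstar S \<Longrightarrow> u @ v \<in> kstar S"
  by (induction rule: kstar.induct) (auto intro: kstar.intros)

lemma kstar_concat: "\<forall>x\<in>set xs. x \<in> kstar S \<Longrightarrow> concat xs \<in> kstar S"
  by (induction xs) (auto intro: kstar.intros kstar_append)

lemma subst_word_append:
  "subst_word \<phi> (u @ v) = conc (subst_word \<phi> u) (subst_word \<phi> v)"
proof (induction u)
  case Nil
  then show ?case by (auto simp: conc_def)
next
  case (Cons a u)
  then show ?case by (auto simp: conc_def) (metis append.assoc)+
qed

lemma Nil_in_subst_word_append:
  "[] \<in> subst_word \<phi> u \<Longrightarrow> [] \<in> subst_word \<phi> v \<Longrightarrow> [] \<in> subst_word \<phi> (u @ v)"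
  by (force simp: subst_word_append conc_def)

lemma Nil_in_subst_word_concat:
  "\<forall>x\<in>set xs. [] \<in> subst_word \<phi> x \<Longrightarrow> [] \<in> subst_word \<phi> (concat xs)"
  by (induction xs) (auto intro: Nil_in_subst_word_append)

lemma Nil_in_subst_word_kstar:
  assumes "\<forall>w\<in>S. [] \<in> subst_word \<phi> w" and "u \<in> kstar S"
  shows "[] \<in> subst_word \<phi> u"
  using assms(2) by induction (auto intro: Nil_in_subst_word_append assms(1)[rule_format])

lemma subst_word_subset_erasable_context:
  assumes "[] \<in> subst_word \<phi> u" and "[] \<in> subst_word \<phi> v"
  shows "subst_word \<phi> x \<subseteq> subst_word \<phi> (u @ x @ v)"
proof -
  have "subst_word \<phi> x \<subseteq> conc (subst_word \<phi> x) (subst_word \<phi> v)"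
    using assms(2) by (rule subset_concI1)
  also have "\<dots> \<subseteq> conc (subst_word \<phi> u) (conc (subst_word \<phi> x) (subst_word \<phi> v))"
    using assms(1) by (rule subset_concI2)
  finally show ?thesis by (simp add: subst_word_append)
qed

lemma subst_word_subset_concat:
  assumes "\<forall>y\<in>set xs. [] \<in> subst_word \<phi> y" and "x \<in> set xs"
  shows "subst_word \<phi> x \<subseteq> subst_word \<phi> (concat xs)"
proof -
  obtain ys zs where xs: "xs = ys @ x # zs"
    using assms(2) by (meson split_list)
  have "[] \<in> subst_word \<phi> (concat ys)" "[] \<in> subst_word \<phi> (concat zs)"
    using assms(1) by (auto simp: xs intro: Nil_in_subst_word_concat)
  then show ?thesis
    by (simp add: xs subst_word_subset_erasable_context)
qed

lemma has_1word_summaries_iff: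
  "has_1word_summaries \<phi> L \<longleftrightarrow>
     (\<forall>F. finite F \<and> F \<subseteq> L \<longrightarrow> (\<exists>w\<in>L. \<forall>f\<in>F. subst_word \<phi> f \<subseteq> subst_word \<phi> w))"
  unfolding has_1word_summaries_def subst_lang_def by (simp add: UN_subset_iff)

lemma has_1word_summaries_singleton: "has_1word_summaries \<phi> {w}"
  unfolding has_1word_summaries_iff by blast

lemma has_1word_summaries_conc:
  assumes A: "has_1word_summaries \<phi> A" and B: "has_1word_summaries \<phi> B"
  shows "has_1word_summaries \<phi> (conc A B)"
  unfolding has_1word_summaries_iff
proof (intro allI impI)
  fix F assume F: "finite F \<and> F \<subseteq> conc A B"
  then have "\<forall>f\<in>F. \<exists>a b. f = a @ b \<and> a \<in> A \<and> b \<in> B"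
    unfolding conc_def by blast
  then obtain a b where ab: "\<And>f. f \<in> F \<Longrightarrow> f = a f @ b f \<and> a f \<in> A \<and> b f \<in> B"
    by metis
  obtain wa where wa: "wa \<in> A" "\<And>f. f \<in> F \<Longrightarrow> subst_word \<phi> (a f) \<subseteq> subst_word \<phi> wa"
    using A F ab unfolding has_1word_summaries_iff
    by (metis (no_types, lifting) finite_imageI image_subset_iff imageI)
  obtain wb where wb: "wb \<in> B" "\<And>f. f \<in> F \<Longrightarrow> subst_word \<phi> (b f) \<subseteq> subst_word \<phi> wb"
    using B F ab unfolding has_1word_summaries_iff
    by (metis (no_types, lifting) finite_imageI image_subset_iff imageI)
  have "wa @ wb \<in> conc A B"
    using wa wb unfolding conc_def by blast
  moreover have "subst_word \<phi> f \<subseteq> subst_word \<phi> (wa @ wb)" if "f \<in> F" for f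
    using ab[OF that] wa(2)[OF that] wb(2)[OF that]
    by (metis conc_mono subst_word_append)
  ultimately show "\<exists>w\<in>conc A B. \<forall>f\<in>F. subst_word \<phi> f \<subseteq> subst_word \<phi> w"
    by blast
qed

lemma has_1word_summaries_kstar:
  assumes erasable: "\<forall>w\<in>S. [] \<in> subst_word \<phi> w"
  shows "has_1word_summaries \<phi> (kstar S)"
  unfolding has_1word_summaries_iff
proof (intro allI impI)
  fix F assume F: "finite F \<and> F \<subseteq> kstar S"
  then obtain fs where fs: "set fs = F"
    using finite_list by blast
  have "concat fs \<in> kstar S"
    using F fs by (auto intro: kstar_concat)
  moreover have "subst_word \<phi> f \<subseteq> subst_word \<phi> (concat fs)" if "f \<in> F" for f
  proof (rule subst_word_subset_concat)
    show "\<forall>y\<in>set fs. [] \<in> subst_word \<phi> y"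
      using F fs Nil_in_subst_word_kstar[OF erasable] by blast
    show "f \<in> set fs"
      using fs that by simp
  qed
  ultimately show "\<exists>w\<in>kstar S. \<forall>f\<in>F. subst_word \<phi> f \<subseteq> subst_word \<phi> w"
    by blast
qed

lemma has_1word_summaries_uf_form:
  assumes "\<forall>h\<in>{1..m}. \<forall>w\<in>S h. [] \<in> subst_word \<phi> w"
  shows "has_1word_summaries \<phi> (uf_form m N S)"
  using assms
proof (induction m)
  case 0
  then show ?case by (simp add: has_1word_summaries_singleton)
next
  case (Suc m)
  have "has_1word_summaries \<phi> (uf_form m N S)"
    using Suc.IH Suc.prems by (meson atLeastAtMost_iff le_SucI)
  moreover have "has_1word_summaries \<phi> (kstar (S (Suc m)))"
    using Suc.prems by (intro has_1word_summaries_kstar) auto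
  ultimately show ?case
    by (simp add: has_1word_summaries_conc has_1word_summaries_singleton)
qed

theorem proposition14:
  fixes \<phi> :: "'d::finite \<Rightarrow> 's::finite list set"
    and L :: "'d list set"
    and m :: nat
    and N :: "nat \<Rightarrow> 'd list"
    and S :: "nat \<Rightarrow> 'd list set"
  assumes "regular_subst \<phi>"
    and "union_free L"
    and "L = uf_form m N S"
    and "\<forall>h\<in>{1..m}. union_free (S h)"
    and "\<forall>h\<in>{1..m}. \<forall>w\<in>S h. [] \<in> subst_word \<phi> w"
  shows "has_1word_summaries \<phi> L"
  using has_1word_summaries_uf_form[OF assms(5)] assms(3) by simp

end
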